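(* Let $\Phi\colon\mathcal{M}(2;\mathbb{C})\dashrightarrow\mathcal{M}(2;\mathbb{C})$ be a rational map compatible with conjugation. Then $\mathcal{D}$ is invariant by $\Phi$, i.e. $\Phi(\mathcal{D}\setminus\mathrm{Ind}\,\Phi)\subset\mathcal{D}$.
   Context: $\mathcal{D}$ is the set of diagonal $2\times2$ complex matrices, $\mathrm{Ind}\,\Phi$ the indeterminacy locus of $\Phi$. $\Phi$ is compatible with conjugation if $\mathrm{A}\Phi(\mathrm{M})\mathrm{A}^{-1}=\Phi(\mathrm{A}\mathrm{M}\mathrm{A}^{-1})$ for all $\mathrm{A}\in\mathrm{GL}(2;\mathbb{C})$ whenever $\mathrm{M}$ and $\mathrm{A}\mathrm{M}\mathrm{A}^{-1}$ are in $\mathcal{M}(2;\mathbb{C})\setminus\mathrm{Ind}\,\Phi$. *)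

theory Defs
  imports "HOL-Analysis.Analysis"
begin

type_synonym cmat2 = "complex^2^2"

inductive poly_fun :: "(cmat2 \<Rightarrow> complex) \<Rightarrow> bool" where
  pf_const: "poly_fun (\<lambda>M. c)"
| pf_coord: "poly_fun (\<lambda>M. M $ i $ j)"
| pf_add: "poly_fun f \<Longrightarrow> poly_fun g \<Longrightarrow> poly_fun (\<lambda>M. f M + g M)"
| pf_mult: "poly_fun f \<Longrightarrow> poly_fun g \<Longrightarrow> poly_fun (\<lambda>M. f M * g M)"

definition regular_at :: "(cmat2 \<Rightarrow> cmat2) \<Rightarrow> cmat2 \<Rightarrow> bool" where
  "regular_at Phi M \<longleftrightarrow>
     (\<exists>P Q. (\<forall>i j. poly_fun (P i j)) \<and> poly_fun Q \<and> Q M \<noteq> 0 \<and>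
        (\<forall>N. Q N \<noteq> 0 \<longrightarrow> (\<forall>i j. Phi N $ i $ j = P i j N / Q N)))"

definition Ind :: "(cmat2 \<Rightarrow> cmat2) \<Rightarrow> cmat2 set" where
  "Ind Phi = {M. \<not> regular_at Phi M}"

text \<open>A rational map M(2;C) --> M(2;C): regular at some point
  (i.e. given by P_ij/Q with Q not identically zero).\<close>
definition rational_map :: "(cmat2 \<Rightarrow> cmat2) \<Rightarrow> bool" where
  "rational_map Phi \<longleftrightarrow> (\<exists>M. regular_at Phi M)"

definition diag_mats :: "cmat2 set" where
  "diag_mats = {M. \<forall>i j. i \<noteq> j \<longrightarrow> M $ i $ j = 0}"

definition compatible_with_conjugation :: "(cmat2 \<Rightarrow> cmat2) \<Rightarrow> bool" where
  "compatible_with_conjugation Phi \<longleftrightarrow>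
     (\<forall>A M. invertible A \<longrightarrow> M \<notin> Ind Phi \<longrightarrow> A ** M ** matrix_inv A \<notin> Ind Phi \<longrightarrow>
        A ** Phi M ** matrix_inv A = Phi (A ** M ** matrix_inv A))"

end

theory Submission
  imports Defs
begin

text \<open>Conjugation by the involution \<open>diag(1,-1)\<close> fixes every diagonal matrix and negates the
  off-diagonal entries of every matrix. Compatibility with this single conjugation therefore
  forces \<open>\<Phi>(M)\<close> to equal its own off-diagonal negation whenever \<open>M\<close> is diagonal.\<close>

lemma matrix_inv_involution:
  fixes A :: "'a::semiring_1^'n^'n"
  assumes "A ** A = mat 1"
  shows "matrix_inv A = A"
proof -
  have "A ** matrix_inv A = mat 1 \<and> matrix_inv A ** A = mat 1"
    unfolding matrix_inv_def by (rule someI_ex) (use assms in blast)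
  then have "matrix_inv A ** A = mat 1" by blast
  have "matrix_inv A = matrix_inv A ** (A ** A)"
    by (simp add: assms)
  also have "\<dots> = A"
    by (simp add: matrix_mul_assoc \<open>matrix_inv A ** A = mat 1\<close>)
  finally show ?thesis .
qed

definition sign_diag :: cmat2 where
  "sign_diag = (\<chi> i j. if i = j then (if i = 1 then 1 else -1) else 0)"

lemma sign_diag_square: "sign_diag ** sign_diag = mat 1"
  unfolding sign_diag_def by (simp add: matrix_matrix_mult_def mat_def vec_eq_iff sum_2 forall_2)

lemma invertible_sign_diag: "invertible sign_diag"
  unfolding invertible_def using sign_diag_square by blast

lemma matrix_inv_sign_diag: "matrix_inv sign_diag = sign_diag"
  by (rule matrix_inv_involution[OF sign_diag_square])

lemma sign_diag_conj:
  "sign_diag ** X ** sign_diag = (\<chi> i j. if i = j then X $ i $ j else - X $ i $ j)"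
  unfolding sign_diag_def by (simp add: matrix_matrix_mult_def vec_eq_iff sum_2 forall_2)

lemma sign_diag_conj_fixed_iff: "sign_diag ** X ** sign_diag = X \<longleftrightarrow> X \<in> diag_mats"
  by (auto simp: vec_eq_iff sign_diag_conj diag_mats_def)

theorem lemma2p1:
  fixes Phi :: "cmat2 \<Rightarrow> cmat2"
  assumes "rational_map Phi"
    and "compatible_with_conjugation Phi"
  shows "Phi ` (diag_mats - Ind Phi) \<subseteq> diag_mats"
proof
  fix Y assume "Y \<in> Phi ` (diag_mats - Ind Phi)"
  then obtain M where M: "M \<in> diag_mats" "M \<notin> Ind Phi" and Y: "Y = Phi M" by blast
  have fixed: "sign_diag ** M ** matrix_inv sign_diag = M"
    using M(1) by (simp add: matrix_inv_sign_diag sign_diag_conj_fixed_iff)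
  have "sign_diag ** Phi M ** matrix_inv sign_diag = Phi M"
    using assms(2) invertible_sign_diag M(2)
    unfolding compatible_with_conjugation_def by (metis fixed)
  then show "Y \<in> diag_mats"
    by (simp add: Y matrix_inv_sign_diag sign_diag_conj_fixed_iff)
qed

end
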